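(* For every integer $n \geq 1$, \[ 2p(n) - 1 \;=\; \sum_{(a_1,\dots,a_k) \in \mathcal{A}(n)} \left\lfloor \frac{a_{k-1} + a_k}{a_{k-1} + 1} \right\rfloor, \] where $p(n)$ is the number of partitions of $n$.
   Context: An ascending composition of a positive integer $n$ is a finite sequence of positive integers $(a_1,\dots,a_k)$, $k\ge 1$, with $a_1+\dots+a_k=n$ and $a_1\le a_2\le\dots\le a_k$. $\mathcal{A}(n)$ denotes the set of all ascending compositions of $n$, so $|\mathcal{A}(n)| = p(n)$. By convention $a_0 = 0$ for every ascending composition, so for the one-part composition $(n)$ the summand is $\lfloor (0+n)/(0+1)\rfloor = n$. *)

theory Defs
  imports Main "HOL-Library.Multiset"
begin

definition asc_comps :: "nat \<Rightarrow> nat list set" where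
  "asc_comps n = {xs. xs \<noteq> [] \<and> sorted xs \<and> (\<forall>a\<in>set xs. 0 < a) \<and> sum_list xs = n}"

definition partition_count :: "nat \<Rightarrow> nat" where
  "partition_count n = card {M :: nat multiset. (\<forall>a\<in>#M. 0 < a) \<and> sum_mset M = n}"

text \<open>The summand floor((a_{k-1}+a_k)/(a_{k-1}+1)) with convention a_0 = 0;
  for naturals, floor of the quotient is nat division.\<close>
definition summand :: "nat list \<Rightarrow> nat" where
  "summand xs = (let ak = last xs; ak1 = (0 # xs) ! (length xs - 1)
                 in (ak1 + ak) div (ak1 + 1))"

end

theory Submission imports Defs begin

(* Write a partition of n as the nonincreasing list of its parts y >= x >= ..., with x = 0
   for the one-part partition. The summand is then 1 + floor((y - 1) / (x + 1)), so the sum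
   equals p(n) plus the number of pairs (lambda, j) with j >= 1 and j (x + 1) < y. Replacing
   the two largest parts y, x of lambda by y + x - j (x + 1) and j copies of x + 1 maps these
   pairs bijectively onto the partitions of n with at least two parts; j is recovered as the
   multiplicity of the second largest part of the image. Hence the sum is p(n) + (p(n) - 1). *)

lemma length_le_sum_list: "\<forall>a\<in>set zs. 0 < (a::nat) \<Longrightarrow> length zs \<le> sum_list zs"
  by (induction zs) auto

lemma sorted_wrt_replicate: "R x x \<Longrightarrow> sorted_wrt R (replicate k x)"
  by (induction k) auto

lemma replicate_append_eq_iff:
  assumes "u \<notin> set r" "u \<notin> set r'"
  shows "replicate j u @ r = replicate j' u @ r' \<longleftrightarrow> j = j' \<and> r = r'"
  using assms
proof (induction j arbitrary: j')
  case 0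
  then show ?case by (cases j') auto
next
  case (Suc j)
  then show ?case by (cases j') auto
qed

lemma sorted_desc_eq_replicate_append:
  fixes zs :: "'a::linorder list"
  shows "sorted_wrt (\<ge>) zs \<Longrightarrow> \<forall>a\<in>set zs. a \<le> v \<Longrightarrow>
     \<exists>k r. zs = replicate k v @ r \<and> (\<forall>a\<in>set r. a < v)"
proof (induction zs)
  case (Cons a zs)
  show ?case
  proof (cases "a = v")
    case True
    with Cons obtain k r where "zs = replicate k v @ r" "\<forall>a\<in>set r. a < v"
      by auto
    with True show ?thesis
      by (intro exI[of _ "Suc k"] exI[of _ r]) auto
  next
    case False
    with Cons.prems have "a < v"
      by auto
    with Cons.prems have "\<forall>b\<in>set (a # zs). b < v"
      by (auto intro: le_less_trans)
    then show ?thesis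
      by (intro exI[of _ 0]) auto
  qed
qed simp

definition desc_partitions :: "nat \<Rightarrow> nat list set" where
  "desc_partitions n =
     {zs. zs \<noteq> [] \<and> sorted_wrt (\<ge>) zs \<and> (\<forall>a\<in>set zs. 0 < a) \<and> sum_list zs = n}"

text \<open>The convention a_0 = 0 reappears as the value 0 for a one-part list.\<close>
fun second_part :: "nat list \<Rightarrow> nat" where
  "second_part (_ # x # _) = x"
| "second_part _ = 0"

lemma Cons_mem_desc_partitions_iff:
  "y # r \<in> desc_partitions n \<longleftrightarrow>
     0 < y \<and> (\<forall>a\<in>set r. 0 < a \<and> a \<le> y) \<and> sorted_wrt (\<ge>) r \<and> y + sum_list r = n"
  by (auto simp: desc_partitions_def)

lemma finite_desc_partitions: "finite (desc_partitions n)"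
proof -
  have "desc_partitions n \<subseteq> {zs. set zs \<subseteq> {0..n} \<and> length zs \<le> n}"
    using length_le_sum_list member_le_sum_list by (fastforce simp: desc_partitions_def)
  then show ?thesis
    by (rule finite_subset) (simp add: finite_lists_length_le)
qed

lemma asc_comps_eq_rev_image: "asc_comps n = rev ` desc_partitions n"
proof -
  have "asc_comps n = {xs. rev xs \<in> desc_partitions n}"
    by (auto simp: asc_comps_def desc_partitions_def sorted_wrt_rev)
  then show ?thesis
    by (auto simp: image_iff) (metis rev_rev_ident)
qed

lemma summand_rev: "summand (rev (y # r)) = (y + second_part (y # r)) div (second_part (y # r) + 1)"
  by (cases r) (auto simp: summand_def nth_append add.commute)

lemma partition_count_eq_card_asc_comps:
  assumes "n \<ge> 1"
  shows "partition_count n = card (asc_comps n)"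
proof -
  let ?P = "{M :: nat multiset. (\<forall>a\<in>#M. 0 < a) \<and> sum_mset M = n}"
  have "bij_betw mset (asc_comps n) ?P"
  proof (rule bij_betw_byWitness[where f' = sorted_list_of_multiset])
    show "\<forall>xs\<in>asc_comps n. sorted_list_of_multiset (mset xs) = xs"
      by (auto simp: asc_comps_def sorted_sort_id)
    show "mset ` asc_comps n \<subseteq> ?P"
      by (auto simp: asc_comps_def sum_mset_sum_list)
    show "sorted_list_of_multiset ` ?P \<subseteq> asc_comps n"
    proof
      fix xs assume "xs \<in> sorted_list_of_multiset ` ?P"
      then obtain M where M: "M \<in> ?P" and xs: "xs = sorted_list_of_multiset M"
        by blast
      have "mset xs = M"
        by (simp add: xs)
      with M assms have "xs \<noteq> []" "sum_list xs = n" "\<forall>a\<in>set xs. 0 < a"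
        by (auto simp flip: sum_mset_sum_list)
      then show "xs \<in> asc_comps n"
        by (simp add: asc_comps_def xs)
    qed
  qed simp
  then show ?thesis
    unfolding partition_count_def by (simp add: bij_betw_same_card)
qed

lemma summand_rev_desc_partition:
  assumes "zs \<in> desc_partitions n"
  shows "summand (rev zs) = 1 + (hd zs - 1) div (second_part zs + 1)"
proof -
  obtain y r where zs: "zs = y # r" and "0 < y"
    using assms by (cases zs) (auto simp: desc_partitions_def)
  have "summand (rev zs) = (y + second_part zs) div (second_part zs + 1)"
    by (simp only: zs summand_rev)
  also have "\<dots> = ((y - 1) + (second_part zs + 1)) div (second_part zs + 1)"
    using \<open>0 < y\<close> by simp
  also have "\<dots> = (y - 1) div (second_part zs + 1) + 1"
    by (rule div_add_self2) simp
  finally show ?thesis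
    by (simp add: zs)
qed

definition marked_partitions :: "nat \<Rightarrow> (nat list \<times> nat) set" where
  "marked_partitions n =
     (SIGMA zs:desc_partitions n. {1..(hd zs - 1) div (second_part zs + 1)})"

lemma mem_marked_partitions_iff:
  "(zs, j) \<in> marked_partitions n \<longleftrightarrow>
     zs \<in> desc_partitions n \<and> 1 \<le> j \<and> j * (second_part zs + 1) < hd zs"
proof -
  have "j \<le> (hd zs - 1) div (second_part zs + 1) \<longleftrightarrow> j * (second_part zs + 1) < hd zs"
    if "zs \<in> desc_partitions n" "1 \<le> j"
  proof -
    have "0 < hd zs"
      using that(1) by (cases zs) (auto simp: desc_partitions_def)
    then show ?thesis
      by (simp add: less_eq_div_iff_mult_less_eq, linarith)
  qed
  then show ?thesis
    unfolding marked_partitions_def by auto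
qed

fun split_largest :: "nat list \<times> nat \<Rightarrow> nat list" where
  "split_largest (zs, j) =
     (let x = second_part zs in (hd zs + x - j * (x + 1)) # replicate j (x + 1) @ drop 2 zs)"

lemma split_largest_mem:
  assumes "p \<in> marked_partitions n"
  shows "split_largest p \<in> {zs \<in> desc_partitions n. 2 \<le> length zs}"
proof -
  obtain zs j where p: "p = (zs, j)" and zs: "zs \<in> desc_partitions n"
    and j: "1 \<le> j" "j * (second_part zs + 1) < hd zs"
    using assms by (cases p) (auto simp: mem_marked_partitions_iff)
  show ?thesis
  proof (cases zs rule: remdups_adj.cases)
    case (2 y)
    with zs j show ?thesis
      by (auto simp: p Cons_mem_desc_partitions_iff sorted_wrt_append sorted_wrt_replicate sum_list_replicate)
  next
    case (3 y x r)
    with zs j show ?thesis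
      by (auto simp: p Cons_mem_desc_partitions_iff sorted_wrt_append sorted_wrt_replicate sum_list_replicate algebra_simps)
  qed (use zs in \<open>simp add: desc_partitions_def\<close>)
qed

lemma drop_two_le_second_part:
  "zs \<in> desc_partitions n \<Longrightarrow> a \<in> set (drop 2 zs) \<Longrightarrow> a \<le> second_part zs"
  by (cases zs rule: remdups_adj.cases) (auto simp: desc_partitions_def)

lemma nonzero_list_eqI:
  fixes zs zs' :: "nat list"
  assumes "zs \<noteq> []" "zs' \<noteq> []" "0 \<notin> set zs" "0 \<notin> set zs'"
    and "hd zs = hd zs'" "second_part zs = second_part zs'" "drop 2 zs = drop 2 zs'"
  shows "zs = zs'"
  using assms by (cases zs rule: remdups_adj.cases; cases zs' rule: remdups_adj.cases) auto

lemma inj_on_split_largest: "inj_on split_largest (marked_partitions n)"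
proof (rule inj_onI)
  fix p p' assume "p \<in> marked_partitions n" "p' \<in> marked_partitions n"
    and eq: "split_largest p = split_largest p'"
  obtain zs j zs' j' where p: "p = (zs, j)" and p': "p' = (zs', j')"
    by fastforce
  define x x' where "x = second_part zs" and "x' = second_part zs'"
  have zs: "zs \<in> desc_partitions n" "1 \<le> j" "j * (x + 1) < hd zs"
    and zs': "zs' \<in> desc_partitions n" "1 \<le> j'" "j' * (x' + 1) < hd zs'"
    using \<open>p \<in> _\<close> \<open>p' \<in> _\<close> by (auto simp: p p' x_def x'_def mem_marked_partitions_iff)
  have tails: "replicate j (x + 1) @ drop 2 zs = replicate j' (x' + 1) @ drop 2 zs'"
    and heads: "hd zs + x - j * (x + 1) = hd zs' + x' - j' * (x' + 1)"
    using eq by (simp_all add: p p' x_def x'_def Let_def)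
  have "hd (replicate j (x + 1) @ drop 2 zs) = x + 1" "hd (replicate j' (x' + 1) @ drop 2 zs') = x' + 1"
    using zs(2) zs'(2) by (cases j; cases j'; simp)+
  with tails have "x = x'"
    by simp
  have "x + 1 \<notin> set (drop 2 zs)" "x' + 1 \<notin> set (drop 2 zs')"
    using drop_two_le_second_part[OF zs(1)] drop_two_le_second_part[OF zs'(1)]
    unfolding x_def x'_def by fastforce+
  from replicate_append_eq_iff[OF this[unfolded \<open>x = x'\<close>]] have "j = j'" "drop 2 zs = drop 2 zs'"
    using tails by (simp_all add: \<open>x = x'\<close>)
  moreover have "hd zs = hd zs'"
    using heads zs(3) zs'(3) unfolding \<open>x = x'\<close> \<open>j = j'\<close> by linarith
  moreover have "zs \<noteq> []" "zs' \<noteq> []" "0 \<notin> set zs" "0 \<notin> set zs'"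
    using zs(1) zs'(1) by (auto simp: desc_partitions_def)
  ultimately show "p = p'"
    using nonzero_list_eqI[of zs zs'] \<open>x = x'\<close> by (simp add: p p' x_def x'_def)
qed

lemma split_largest_surj:
  assumes "ys \<in> desc_partitions n" "2 \<le> length ys"
  shows "ys \<in> split_largest ` marked_partitions n"
proof -
  obtain t u r0 where ys: "ys = t # u # r0"
    using assms(2) by (cases ys rule: remdups_adj.cases) auto
  have t: "0 < u" "u \<le> t" "t + u + sum_list r0 = n"
    and r0: "sorted_wrt (\<ge>) r0" "\<forall>a\<in>set r0. 0 < a \<and> a \<le> u"
    using assms(1) by (auto simp: ys desc_partitions_def)
  have r0_le: "\<forall>a\<in>set r0. a \<le> u"
    using r0(2) by simp
  obtain k rest where r0_eq: "r0 = replicate k u @ rest" and rest: "\<forall>a\<in>set rest. a < u"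
    using sorted_desc_eq_replicate_append[OF r0(1) r0_le] by blast
  have rest_desc: "sorted_wrt (\<ge>) rest" "\<forall>a\<in>set rest. 0 < a"
    using r0(1) r0(2) unfolding r0_eq sorted_wrt_append set_append by blast+
  have sum: "t + Suc k * u + sum_list rest = n"
    using t(3) by (simp add: r0_eq sum_list_replicate)
  show ?thesis
  proof (cases "u = 1")
    case True
    then have "rest = []"
      using rest rest_desc(2) by (cases rest) auto
    have "([Suc k + t], Suc k) \<in> marked_partitions n"
      using t sum True \<open>rest = []\<close> by (simp add: mem_marked_partitions_iff desc_partitions_def)
    moreover have "ys = split_largest ([Suc k + t], Suc k)"
      by (simp add: ys r0_eq True \<open>rest = []\<close>)
    ultimately show ?thesis
      by (rule rev_image_eqI)
  next
    case False
    define x where "x = u - 1"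
    have u: "u = x + 1" "0 < x"
      using t(1) False by (simp_all add: x_def)
    define y where "y = Suc k * u + (t - x)"
    have y: "Suc k * u < y" "y + x - Suc k * u = t" "y + x + sum_list rest = n"
      using t(2) sum u unfolding y_def by arith+
    have "y # x # rest \<in> desc_partitions n"
      using u y rest rest_desc t(2) by (auto simp: Cons_mem_desc_partitions_iff)
    then have "(y # x # rest, Suc k) \<in> marked_partitions n"
      using y(1) u by (simp add: mem_marked_partitions_iff)
    moreover have "ys = split_largest (y # x # rest, Suc k)"
      using y(2) by (simp add: ys r0_eq u(1) Let_def)
    ultimately show ?thesis
      by (rule rev_image_eqI)
  qed
qed

lemma bij_betw_split_largest:
  "bij_betw split_largest (marked_partitions n) {zs \<in> desc_partitions n. 2 \<le> length zs}"
proof -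
  have "split_largest ` marked_partitions n = {zs \<in> desc_partitions n. 2 \<le> length zs}"
    using split_largest_mem split_largest_surj by blast
  with inj_on_split_largest show ?thesis
    by (simp add: bij_betw_def)
qed

lemma card_marked_partitions:
  "card (marked_partitions n) = (\<Sum>zs\<in>desc_partitions n. (hd zs - 1) div (second_part zs + 1))"
  by (simp add: marked_partitions_def finite_desc_partitions)

lemma card_desc_partitions_length_ge_2:
  assumes "n \<ge> 1"
  shows "card {zs \<in> desc_partitions n. 2 \<le> length zs} + 1 = card (desc_partitions n)"
proof -
  let ?T = "{zs \<in> desc_partitions n. 2 \<le> length zs}"
  have "desc_partitions n = insert [n] ?T"
  proof (intro equalityI subsetI)
    fix zs assume "zs \<in> desc_partitions n"
    then show "zs \<in> insert [n] ?T"
      by (cases zs rule: remdups_adj.cases) (auto simp: desc_partitions_def)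
  qed (use assms in \<open>auto simp: desc_partitions_def\<close>)
  then have "card (desc_partitions n) = card (insert [n] ?T)"
    by (rule arg_cong)
  also have "\<dots> = card ?T + 1"
    by (simp add: finite_desc_partitions)
  finally show ?thesis ..
qed

theorem mainTheorem1:
  fixes n :: nat
  assumes "n \<ge> 1"
  shows "int (2 * partition_count n) - 1 = int (\<Sum>xs\<in>asc_comps n. summand xs)"
proof -
  let ?D = "desc_partitions n"
  have "(\<Sum>xs\<in>asc_comps n. summand xs) = (\<Sum>zs\<in>?D. summand (rev zs))"
    by (simp add: asc_comps_eq_rev_image sum.reindex)
  also have "\<dots> = (\<Sum>zs\<in>?D. 1 + (hd zs - 1) div (second_part zs + 1))"
    by (rule sum.cong) (simp_all add: summand_rev_desc_partition)
  also have "\<dots> = card ?D + card (marked_partitions n)"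
    unfolding sum.distrib card_marked_partitions by simp
  also have "\<dots> = card ?D + card {zs \<in> ?D. 2 \<le> length zs}"
    using bij_betw_same_card[OF bij_betw_split_largest] by simp
  finally have "(\<Sum>xs\<in>asc_comps n. summand xs) + 1 = 2 * card ?D"
    using card_desc_partitions_length_ge_2[OF assms] by simp
  moreover have "partition_count n = card ?D"
    by (simp add: partition_count_eq_card_asc_comps[OF assms] asc_comps_eq_rev_image card_image)
  ultimately show ?thesis
    by linarith
qed

end
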